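(* The unary language $\mathtt{UGAUSS}=\{a^{n^2+n}\mid n\in\mathbb{N}\}$ is recognized by some real-time deterministic vector automaton of dimension $2$ ($\mathrm{rtDVA}(2)$).
   Context: Here $\mathbb{N}=\{0,1,2,\dots\}$. A real-time deterministic vector automaton of dimension $k$ ($\mathrm{rtDVA}(k)$) is a 6-tuple $\mathcal{V}=(Q,\Sigma,\delta,q_0,Q_a,v)$ where $Q$ is a finite set of states, $q_0\in Q$ the initial state, $Q_a\subseteq Q$ the accept states, $\Sigma$ the input alphabet, $v\in\mathbb{Q}^k$ an initial row vector (freely chosen), and $\delta:Q\times(\Sigma\cup\{\cent,\$\})\times\{=,\neq\}\to Q\times S$, with $S$ the set of $k\times k$ rational matrices. On input $w$ the machine reads $\cent w\$$ left to right, one symbol per step, starting in $q_0$ with vector $v$; in state $q$ reading $\sigma$, with $\omega$ equal to "$=$" iff the first vector entry equals $1$, if $\delta(q,\sigma,\omega)=(q',M)$ it moves to $q'$ and multiplies the row vector on the right by $M$. The input is accepted iff after processing $\$$ the state is in $Q_a$ and the first vector entry equals $1$. *)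

theory Defs
  imports Main "HOL.Rat"
begin

datatype 'a tape_sym = Cent | Sym 'a | Dollar

text \<open>Row vectors of dimension k are functions nat => rat (entries 0..k-1 used);
  k x k matrices are functions nat => nat => rat (entries below k used).
  Row vector times matrix:\<close>
definition vecmul :: "nat \<Rightarrow> (nat \<Rightarrow> rat) \<Rightarrow> (nat \<Rightarrow> nat \<Rightarrow> rat) \<Rightarrow> (nat \<Rightarrow> rat)" where
  "vecmul k v M = (\<lambda>j. \<Sum>i<k. v i * M i j)"

text \<open>Transition function: state, symbol, test (True means the first entry equals 1)
  giving new state and matrix.\<close>
type_synonym ('q, 'a) dva_trans =
  "'q \<Rightarrow> 'a tape_sym \<Rightarrow> bool \<Rightarrow> 'q \<times> (nat \<Rightarrow> nat \<Rightarrow> rat)"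

fun dva_run :: "nat \<Rightarrow> ('q, 'a) dva_trans \<Rightarrow> 'q \<Rightarrow> (nat \<Rightarrow> rat) \<Rightarrow> 'a tape_sym list
                 \<Rightarrow> 'q \<times> (nat \<Rightarrow> rat)" where
  "dva_run k \<delta> q v [] = (q, v)"
| "dva_run k \<delta> q v (\<sigma> # s) =
     (let (q', M) = \<delta> q \<sigma> (v 0 = 1) in dva_run k \<delta> q' (vecmul k v M) s)"

definition is_rtDVA :: "nat \<Rightarrow> 'q set \<Rightarrow> 'a set \<Rightarrow> ('q, 'a) dva_trans \<Rightarrow> 'q \<Rightarrow> 'q set
                        \<Rightarrow> (nat \<Rightarrow> rat) \<Rightarrow> bool" where
  "is_rtDVA k Q \<Sigma> \<delta> q0 Qa v \<longleftrightarrow>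
     1 \<le> k \<and> finite Q \<and> q0 \<in> Q \<and> Qa \<subseteq> Q \<and>
     (\<forall>q\<in>Q. \<forall>\<sigma> b. (\<sigma> = Cent \<or> \<sigma> = Dollar \<or> (\<exists>a\<in>\<Sigma>. \<sigma> = Sym a))
                  \<longrightarrow> fst (\<delta> q \<sigma> b) \<in> Q)"

definition dva_accepts :: "nat \<Rightarrow> ('q, 'a) dva_trans \<Rightarrow> 'q \<Rightarrow> 'q set \<Rightarrow> (nat \<Rightarrow> rat)
                           \<Rightarrow> 'a list \<Rightarrow> bool" where
  "dva_accepts k \<delta> q0 Qa v w =
     (let (q, u) = dva_run k \<delta> q0 v (Cent # map Sym w @ [Dollar]) in q \<in> Qa \<and> u 0 = 1)"

text \<open>L (a language over Sigma) is recognized by some rtDVA(k). States are drawn from nat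
  (any finite state set can be renamed into nat).\<close>
definition rtDVA_recognizable :: "nat \<Rightarrow> 'a set \<Rightarrow> 'a list set \<Rightarrow> bool" where
  "rtDVA_recognizable k \<Sigma> L \<longleftrightarrow>
     (\<exists>(Q :: nat set) \<delta> q0 Qa v. is_rtDVA k Q \<Sigma> \<delta> q0 Qa v \<and>
        {w \<in> lists \<Sigma>. dva_accepts k \<delta> q0 Qa v w} = L)"

definition UGAUSS :: "unit list set" where
  "UGAUSS = {replicate (n^2 + n) () | n :: nat. True}"

end

theory Submission
  imports Defs
begin

text \<open>The automaton has a single state and keeps a vector (x, y). Reading a letter with x = 1
  it moves to (2y, 4y), otherwise it halves x. Starting from (1, 1), the vector is (1, 4^n)
  after n^2 + n letters; the next 2n + 2 letters take it to (2^(2n+1), 4^(n+1)) and then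
  halve x down to 1 exactly at (n+1)^2 + (n+1). In between, x is a power of 2 greater
  than 1, so x = 1 holds precisely after n^2 + n letters.\<close>

definition gauss_step :: "rat \<times> rat \<Rightarrow> rat \<times> rat" where
  "gauss_step = (\<lambda>(x, y). if x = 1 then (2 * y, 4 * y) else (x / 2, y))"

lemma two_power_Suc_neq_one: "(2::rat) ^ Suc e \<noteq> 1"
  using one_less_power[of "2::rat" "Suc e"] by simp

lemma gauss_step_phase:
  assumes "0 < j" "j \<le> 2 * n + 2"
  shows "(gauss_step ^^ j) (1, 4 ^ n) = (2 ^ (2 * n + 2 - j), 4 ^ (n + 1))"
  using assms
proof (induction j)
  case 0
  then show ?case by simp
next
  case (Suc j)
  show ?case
  proof (cases "j = 0")
    case True
    then show ?thesis
      by (simp add: gauss_step_def power_add power_mult)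
  next
    case False
    with Suc obtain e where e: "2 * n + 2 - j = Suc e" "2 * n + 2 - Suc j = e"
      by (metis Suc_diff_Suc Suc_le_lessD diff_Suc_Suc)
    with False Suc two_power_Suc_neq_one[of e] show ?thesis
      by (simp add: gauss_step_def)
  qed
qed

lemma gauss_step_orbit_oblong: "(gauss_step ^^ (n\<^sup>2 + n)) (1, 1) = (1, 4 ^ n)"
proof (induction n)
  case 0
  then show ?case by simp
next
  case (Suc n)
  have "Suc n ^ 2 + Suc n = (2 * n + 2) + (n\<^sup>2 + n)"
    by (simp add: power2_eq_square)
  then have "(gauss_step ^^ (Suc n ^ 2 + Suc n)) (1, 1)
      = (gauss_step ^^ (2 * n + 2)) ((gauss_step ^^ (n\<^sup>2 + n)) (1, 1))"
    by (simp only: funpow_add comp_apply)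
  then show ?case
    using Suc gauss_step_phase[of "2 * n + 2" n] by simp
qed

lemma oblong_decomposition: "\<exists>n j. (m::nat) = n\<^sup>2 + n + j \<and> j < 2 * n + 2"
proof (induction m)
  case 0
  show ?case by (intro exI[of _ 0]) simp
next
  case (Suc m)
  then obtain n j where nj: "m = n\<^sup>2 + n + j" "j < 2 * n + 2" by blast
  show ?case
  proof (cases "Suc j < 2 * n + 2")
    case True
    with nj show ?thesis by (intro exI[of _ n] exI[of _ "Suc j"]) simp
  next
    case False
    with nj have "Suc m = (Suc n)\<^sup>2 + Suc n + 0" by (simp add: power2_eq_square)
    then show ?thesis by (intro exI[of _ "Suc n"] exI[of _ 0]) simp
  qed
qed

lemma strict_mono_oblong: "strict_mono (\<lambda>n::nat. n\<^sup>2 + n)"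
  by (rule strict_monoI) (simp add: add_strict_mono power_strict_mono)

lemma fst_gauss_step_orbit_eq_one_iff:
  "fst ((gauss_step ^^ m) (1, 1)) = 1 \<longleftrightarrow> (\<exists>n. m = n\<^sup>2 + n)"
proof -
  obtain n j where nj: "m = n\<^sup>2 + n + j" "j < 2 * n + 2"
    using oblong_decomposition by blast
  show ?thesis
  proof (cases "j = 0")
    case True
    with nj show ?thesis by (auto simp: gauss_step_orbit_oblong)
  next
    case False
    with nj obtain e where e: "2 * n + 2 - j = Suc e"
      by (metis Suc_diff_Suc add_2_eq_Suc' add_Suc_right)
    have "(gauss_step ^^ m) (1, 1) = (gauss_step ^^ j) ((gauss_step ^^ (n\<^sup>2 + n)) (1, 1))"
      unfolding nj(1) by (simp only: add.commute[of "n\<^sup>2 + n"] funpow_add comp_apply)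
    also have "\<dots> = (gauss_step ^^ j) (1, 4 ^ n)"
      by (simp only: gauss_step_orbit_oblong)
    also have "\<dots> = (2 ^ Suc e, 4 ^ (n + 1))"
      using False nj e gauss_step_phase[of j n] by simp
    finally have not_one: "fst ((gauss_step ^^ m) (1, 1)) \<noteq> 1"
      using two_power_Suc_neq_one[of e] by simp
    have "m \<noteq> k\<^sup>2 + k" for k
    proof
      assume m: "m = k\<^sup>2 + k"
      have "n\<^sup>2 + n < k\<^sup>2 + k"
        using nj False m by simp
      moreover have "k\<^sup>2 + k < (Suc n)\<^sup>2 + Suc n"
        using nj m by (simp add: power2_eq_square)
      ultimately show False
        using strict_mono_less[OF strict_mono_oblong, of n k]
          strict_mono_less[OF strict_mono_oblong, of k "Suc n"] by simp
    qed
    with not_one show ?thesis by blast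
  qed
qed

definition restart_mat :: "nat \<Rightarrow> nat \<Rightarrow> rat" where
  "restart_mat i j = (if i = 1 \<and> j = 0 then 2 else if i = 1 \<and> j = 1 then 4 else 0)"

definition halve_first_mat :: "nat \<Rightarrow> nat \<Rightarrow> rat" where
  "halve_first_mat i j = (if i = 0 \<and> j = 0 then 1/2 else if i = 1 \<and> j = 1 then 1 else 0)"

definition id_mat :: "nat \<Rightarrow> nat \<Rightarrow> rat" where
  "id_mat i j = (if i = j then 1 else 0)"

definition gauss_trans :: "(nat, unit) dva_trans" where
  "gauss_trans q \<sigma> b =
     (0, if \<sigma> = Sym () then (if b then restart_mat else halve_first_mat) else id_mat)"

definition gauss_vec_step :: "(nat \<Rightarrow> rat) \<Rightarrow> nat \<Rightarrow> rat" where
  "gauss_vec_step v = vecmul 2 v (if v 0 = 1 then restart_mat else halve_first_mat)"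

lemma sum_less_two: "(\<Sum>i<(2::nat). f i) = f 0 + (f 1 :: rat)"
  by (simp add: numeral_2_eq_2)

lemma gauss_vec_step_coords:
  "(gauss_vec_step v 0, gauss_vec_step v 1) = gauss_step (v 0, v 1)"
  by (simp add: gauss_vec_step_def gauss_step_def vecmul_def sum_less_two
      restart_mat_def halve_first_mat_def)

lemma funpow_gauss_vec_step_coords:
  "(((gauss_vec_step ^^ m) v) 0, ((gauss_vec_step ^^ m) v) 1) = (gauss_step ^^ m) (v 0, v 1)"
proof (induction m)
  case 0
  then show ?case by simp
next
  case (Suc m)
  then show ?case
    using gauss_vec_step_coords[of "(gauss_vec_step ^^ m) v"] by simp
qed

lemma dva_run_gauss_letters:
  "dva_run 2 gauss_trans 0 v (replicate m (Sym ()) @ rest)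
     = dva_run 2 gauss_trans 0 ((gauss_vec_step ^^ m) v) rest"
proof (induction m arbitrary: v)
  case 0
  then show ?case by simp
next
  case (Suc m)
  have "dva_run 2 gauss_trans 0 v (replicate (Suc m) (Sym ()) @ rest)
      = dva_run 2 gauss_trans 0 (gauss_vec_step v) (replicate m (Sym ()) @ rest)"
    by (simp add: gauss_trans_def gauss_vec_step_def if_distrib)
  also have "\<dots> = dva_run 2 gauss_trans 0 ((gauss_vec_step ^^ m) (gauss_vec_step v)) rest"
    by (rule Suc.IH)
  also have "(gauss_vec_step ^^ m) (gauss_vec_step v) = (gauss_vec_step ^^ Suc m) v"
    by (simp only: funpow_Suc_right comp_apply)
  finally show ?case .
qed

lemma vecmul_id_mat: "vecmul 2 v id_mat j = (if j < 2 then v j else 0)"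
  by (auto simp: vecmul_def id_mat_def numeral_2_eq_2 less_Suc_eq)

lemma gauss_accepts_iff:
  "dva_accepts 2 gauss_trans 0 {0} (\<lambda>_. 1) (w :: unit list)
     \<longleftrightarrow> fst ((gauss_step ^^ length w) (1, 1)) = 1"
proof -
  let ?u = "(gauss_vec_step ^^ length w) (vecmul 2 (\<lambda>_. 1) id_mat)"
  have "map Sym w = replicate (length w) (Sym ())"
    by (induction w) auto
  then have "dva_run 2 gauss_trans 0 (\<lambda>_. 1) (Cent # map Sym w @ [Dollar])
      = (0, vecmul 2 ?u id_mat)"
    by (simp add: gauss_trans_def dva_run_gauss_letters)
  moreover have "fst (?u 0, ?u 1) = fst ((gauss_step ^^ length w) (1, 1))"
    unfolding funpow_gauss_vec_step_coords by (simp add: vecmul_id_mat)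
  ultimately show ?thesis
    by (simp add: dva_accepts_def vecmul_id_mat)
qed

lemma mem_UGAUSS_iff: "w \<in> UGAUSS \<longleftrightarrow> (\<exists>n. length w = n\<^sup>2 + n)"
proof
  assume "w \<in> UGAUSS"
  then show "\<exists>n. length w = n\<^sup>2 + n"
    by (auto simp: UGAUSS_def)
next
  assume "\<exists>n. length w = n\<^sup>2 + n"
  then obtain n where n: "length w = n\<^sup>2 + n" by blast
  have "w = replicate (length w) ()"
    by (induction w) auto
  with n have "w = replicate (n\<^sup>2 + n) ()"
    by simp
  then show "w \<in> UGAUSS"
    unfolding UGAUSS_def by blast
qed

theorem theorem2:
  shows "rtDVA_recognizable 2 (UNIV :: unit set) UGAUSS"
  unfolding rtDVA_recognizable_def
proof (intro exI conjI)
  show "is_rtDVA 2 {0::nat} (UNIV :: unit set) gauss_trans 0 {0} (\<lambda>_. 1)"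
    by (simp add: is_rtDVA_def gauss_trans_def)
  show "{w \<in> lists UNIV. dva_accepts 2 gauss_trans 0 {0} (\<lambda>_. 1) w} = UGAUSS"
    by (simp add: set_eq_iff gauss_accepts_iff fst_gauss_step_orbit_eq_one_iff mem_UGAUSS_iff)
qed

end
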